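(* Let $n\in\mathbf{N}$ and $A\subset[n]$ have property P, with $Z^{1(2)}_{(\frac29,\frac13]}$, $Z_B$, $Z_G$, $Z_{(\frac13,\frac12]}$ as in the context. Define $$B_3=2\cdot\big(Z^{1(2)}_{(\frac29,\frac13]}\cup Z_B\cup Z_G\big)\ \cup\ Z_{(\frac13,\frac12]}\ \cup\ \tfrac94\cdot Z_B\ \cup\ \big(A\cap(\tfrac n2,\tfrac{2n}{3}]\big),$$ and $A'''=\{m\in\mathbf{N}:3m\in A_{(\frac12,1]}+A_{(\frac12,1]}\}$ where $A_{(\frac12,1]}=A\cap(\frac n2,n]$. Then $B_3$ is a set of integers contained in $(\frac n3,\frac{2n}{3}]$, $|B_3|=\left|A\cap[1,\frac{2n}{3}]\right|+|Z_B|$, and $B_3\cap A'''=\emptyset$.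
   Context: A set $A\subset\mathbf{N}$ has property P if there are no $x,y,z\in A$ (not necessarily distinct $x,y$) with $z<x$, $z<y$ and $z\mid x+y$. Intervals denote sets of integers. For $a\in A\cap[1,\frac n2]$ let $m_a\geqslant0$ be the unique integer with $3^{m_a}a\in(\frac n6,\frac n2]$. Define $Z=\{3^{m_a}a: a\in A\cap[1,\frac n2],\ 3^{m_a}a\in(\frac{2n}{9},\frac n2]\}\cup\{2\cdot3^{m_a}a: a\in A\cap[1,\frac n2],\ 3^{m_a}a\in(\frac n6,\frac{2n}{9}]\}$. Let $Z^{1(2)}_{(\frac29,\frac13]}=Z\cap(\frac{2n}{9},\frac n3]\cap(1+2\mathbf{Z})$; $Z_B=\{z\in Z\cap(\frac{2n}{9},\frac n3]\cap2\mathbf{Z}:\frac{3z}{2}\in Z\}$; $Z_G=\{z\in Z\cap(\frac{2n}{9},\frac n3]\cap2\mathbf{Z}:\frac{3z}{2}\notin Z\}$; $Z_{(\frac13,\frac12]}=Z\cap(\frac n3,\frac n2]$. *)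

theory Defs
  imports Complex_Main
begin

definition propP :: "nat set \<Rightarrow> bool" where
  "propP A \<longleftrightarrow> (\<forall>x\<in>A. \<forall>y\<in>A. \<forall>z\<in>A. z < x \<and> z < y \<longrightarrow> \<not> z dvd (x + y))"

definition mexp :: "nat \<Rightarrow> nat \<Rightarrow> nat" where
  "mexp n a = (THE m. real n / 6 < real (3 ^ m * a) \<and> real (3 ^ m * a) \<le> real n / 2)"

definition Zset :: "nat \<Rightarrow> nat set \<Rightarrow> nat set" where
  "Zset n A =
     {3 ^ mexp n a * a | a. a \<in> A \<and> 1 \<le> a \<and> real a \<le> real n / 2
                          \<and> 2 * real n / 9 < real (3 ^ mexp n a * a) \<and> real (3 ^ mexp n a * a) \<le> real n / 2}
   \<union> {2 * (3 ^ mexp n a * a) | a. a \<in> A \<and> 1 \<le> a \<and> real a \<le> real n / 2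
                          \<and> real n / 6 < real (3 ^ mexp n a * a) \<and> real (3 ^ mexp n a * a) \<le> 2 * real n / 9}"

definition Zodd :: "nat \<Rightarrow> nat set \<Rightarrow> nat set" where
  "Zodd n A = {z \<in> Zset n A. 2 * real n / 9 < real z \<and> real z \<le> real n / 3 \<and> odd z}"

definition ZB :: "nat \<Rightarrow> nat set \<Rightarrow> nat set" where
  "ZB n A = {z \<in> Zset n A. 2 * real n / 9 < real z \<and> real z \<le> real n / 3 \<and> even z
                \<and> 3 * z div 2 \<in> Zset n A}"

definition ZG :: "nat \<Rightarrow> nat set \<Rightarrow> nat set" where
  "ZG n A = {z \<in> Zset n A. 2 * real n / 9 < real z \<and> real z \<le> real n / 3 \<and> even z
                \<and> 3 * z div 2 \<notin> Zset n A}"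

definition Zhalf :: "nat \<Rightarrow> nat set \<Rightarrow> nat set" where
  "Zhalf n A = {z \<in> Zset n A. real n / 3 < real z \<and> real z \<le> real n / 2}"

definition B3 :: "nat \<Rightarrow> nat set \<Rightarrow> real set" where
  "B3 n A = (\<lambda>z. 2 * real z) ` (Zodd n A \<union> ZB n A \<union> ZG n A)
          \<union> real ` Zhalf n A
          \<union> (\<lambda>z. 9 / 4 * real z) ` ZB n A
          \<union> real ` {a \<in> A. real n / 2 < real a \<and> real a \<le> 2 * real n / 3}"

definition Aupper :: "nat \<Rightarrow> nat set \<Rightarrow> nat set" where
  "Aupper n A = {a \<in> A. real n / 2 < real a \<and> a \<le> n}"

definition A3 :: "nat \<Rightarrow> nat set \<Rightarrow> nat set" where
  "A3 n A = {m. \<exists>x\<in>Aupper n A. \<exists>y\<in>Aupper n A. 3 * m = x + y}"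

end

theory Submission
  imports Defs
begin

text \<open>Property P forbids \<open>b dvd 2 * c\<close> for \<open>b < c\<close> in \<open>A\<close>. Consequently two numbers
  \<open>3^i * a\<close>, \<open>3^j * b\<close> with \<open>a, b \<in> A\<close> coincide only if \<open>a = b\<close>, and \<open>3^i * a \<noteq> 2 * 3^j * b\<close>.
  This makes \<open>a \<mapsto> 3^(m_a) a\<close> (or its double) injective, so \<open>|Z| = |A \<inter> [1, n/2]|\<close>, and it
  separates the four pieces of \<open>B\<^sub>3\<close> wherever their ranges overlap. For \<open>z \<in> Z\<^sub>B\<close> the element
  \<open>3z/2\<close> of \<open>Z\<close> must be of the form \<open>2 * 3^f * b\<close>, so \<open>9z/4 = 3^(f+1) * b\<close> is an integer in
  \<open>(n/2, 2n/3]\<close>. Finally every element \<open>t\<close> of \<open>B\<^sub>3\<close> has a divisor \<open>d \<in> A\<close> that is smaller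
  than any \<open>x, y \<in> A \<inter> (n/2, n]\<close> with \<open>x + y = 3t\<close> (either \<open>d \<le> n/2\<close>, or \<open>d = t > n/2\<close>), which
  property P rules out.\<close>

lemma real_bound_iffs:
  fixes n x :: nat
  shows "real x \<le> real n / 2 \<longleftrightarrow> 2 * x \<le> n"
    and "2 * real n / 9 < real x \<longleftrightarrow> 2 * n < 9 * x"
    and "real n / 6 < real x \<longleftrightarrow> n < 6 * x"
    and "real x \<le> 2 * real n / 9 \<longleftrightarrow> 9 * x \<le> 2 * n"
    and "real x \<le> real n / 3 \<longleftrightarrow> 3 * x \<le> n"
    and "real n / 3 < real x \<longleftrightarrow> n < 3 * x"
    and "real n / 2 < real x \<longleftrightarrow> n < 2 * x"
    and "real x \<le> 2 * real n / 3 \<longleftrightarrow> 3 * x \<le> 2 * n"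
  by (simp_all add: field_simps) linarith+

lemma propP_not_dvd_double:
  assumes "propP A" "b \<in> A" "c \<in> A" "b < c"
  shows "\<not> b dvd 2 * c"
  using assms unfolding propP_def mult_2 by blast

lemma propP_pow3_cancel:
  assumes "propP A" "a \<in> A" "b \<in> A" "3 ^ i * a = 3 ^ j * (b :: nat)"
  shows "a = b"
proof -
  have False if "a \<in> A" "b \<in> A" "3 ^ i * a = 3 ^ j * (b :: nat)" "i < j" "a \<noteq> b" for a b i j
  proof -
    obtain k where "j = i + Suc k" using \<open>i < j\<close> by (metis add_Suc_right less_imp_Suc_add)
    with that(3) have a: "a = 3 ^ Suc k * b" by (simp add: power_add)
    with that(5) have "b < a" using one_less_power[of "3::nat" "Suc k"] by (cases "b = 0") simp_all
    moreover have "b dvd 2 * a" using a by simp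
    ultimately show False using propP_not_dvd_double[OF assms(1) that(2,1)] by blast
  qed
  from this[of a b i j] this[of b a j i] assms(2-4) show ?thesis
    by (cases i j rule: linorder_cases) auto
qed

lemma propP_pow3_neq_double:
  assumes "propP A" "a \<in> A" "b \<in> A" "0 < a" "0 < b"
  shows "3 ^ i * a \<noteq> 2 * (3 ^ j * (b :: nat))"
proof
  assume eq: "3 ^ i * a = 2 * (3 ^ j * b)"
  show False
  proof (cases "i \<le> j")
    case True
    then obtain k where "j = i + k" by (metis le_add_diff_inverse)
    with eq have a: "a = 2 * 3 ^ k * b" by (simp add: power_add ac_simps)
    moreover have "(1::nat) < 2 * 3 ^ k" using one_le_power[of "3::nat" k] by linarith
    ultimately have "b < a" using \<open>0 < b\<close> by simp
    moreover have "b dvd 2 * a" using a by simp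
    ultimately show False using propP_not_dvd_double[OF assms(1,3,2)] by blast
  next
    case False
    then obtain k where "i = j + Suc k" by (metis add_Suc_right leI less_imp_Suc_add)
    with eq have b: "3 ^ Suc k * a = 2 * b" by (simp add: power_add ac_simps)
    moreover have "3 * a \<le> 3 ^ Suc k * a" by (simp add: mult_le_mono1)
    ultimately have "a < b" using \<open>0 < a\<close> by linarith
    moreover have "a dvd 2 * b" using b by (metis dvd_triv_right)
    ultimately show False using propP_not_dvd_double[OF assms(1,2,3)] by blast
  qed
qed

lemma propP_small_divisor_not_in:
  assumes "propP A" "d \<in> A" "d dvd t" "2 * d \<le> n" "n < 2 * t"
  shows "t \<notin> A"
  using propP_not_dvd_double[OF assms(1,2), of t] assms(3-5) by auto

lemma propP_not_in_A3:
  assumes "propP A" "d \<in> A" "d dvd t" and small: "2 * d \<le> n \<or> d + n < 3 * t"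
  shows "t \<notin> A3 n A"
proof
  assume "t \<in> A3 n A"
  then obtain x y where xy: "x \<in> A" "y \<in> A" "n < 2 * x" "n < 2 * y" "x \<le> n" "y \<le> n" "3 * t = x + y"
    unfolding A3_def Aupper_def real_bound_iffs by blast
  have "d < x" "d < y" using small xy(3-7) by auto
  moreover have "d dvd x + y" using \<open>d dvd t\<close> xy(7) by (metis dvd_mult2 mult.commute)
  ultimately show False using assms(1,2) xy(1,2) unfolding propP_def by blast
qed

lemma mexp_eqI:
  assumes "n < 6 * (3 ^ m * a)" "2 * (3 ^ m * a) \<le> n"
  shows "mexp n a = m"
proof -
  have below: "\<not> n < 6 * (3 ^ k * a)" if "k < l" "2 * (3 ^ l * a) \<le> n" for k l
  proof -
    have "3 * 3 ^ k \<le> (3::nat) ^ l" using power_increasing[of "Suc k" l "3::nat"] that(1) by simp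
    then have "3 * (3 ^ k * a) \<le> 3 ^ l * a" using mult_le_mono1 by (metis mult.assoc)
    then show ?thesis using that(2) by linarith
  qed
  have "m' = m" if "n < 6 * (3 ^ m' * a)" "2 * (3 ^ m' * a) \<le> n" for m'
    using below[of m' m] below[of m m'] assms that by (metis linorder_neqE_nat)
  then show ?thesis
    unfolding mexp_def real_bound_iffs using assms by (intro the_equality) blast+
qed

lemma mexp_bounds:
  assumes "0 < a" "2 * a \<le> n"
  shows "n < 6 * (3 ^ mexp n a * a)" and "2 * (3 ^ mexp n a * a) \<le> n"
proof -
  define m where "m = (LEAST m. n < 6 * (3 ^ m * a))"
  have "n < 3 ^ n"
    using less_le_trans[OF less_exp power_mono[of "2::nat" 3 n]] by simp
  also have "\<dots> \<le> 6 * (3 ^ n * a)" using \<open>0 < a\<close> by simp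
  finally have upper: "n < 6 * (3 ^ m * a)" unfolding m_def by (rule LeastI)
  have lower: "2 * (3 ^ m * a) \<le> n"
  proof (cases m)
    case 0
    then show ?thesis using assms(2) by simp
  next
    case (Suc k)
    then have "\<not> n < 6 * (3 ^ k * a)" unfolding m_def by (metis lessI not_less_Least)
    then show ?thesis using Suc by simp
  qed
  from upper lower show "n < 6 * (3 ^ mexp n a * a)" and "2 * (3 ^ mexp n a * a) \<le> n"
    using mexp_eqI[OF upper lower] by simp_all
qed

definition zrep :: "nat \<Rightarrow> nat \<Rightarrow> nat" where
  "zrep n a = (if 2 * n < 9 * (3 ^ mexp n a * a) then 3 ^ mexp n a * a else 2 * (3 ^ mexp n a * a))"

definition Alow :: "nat \<Rightarrow> nat set \<Rightarrow> nat set" where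
  "Alow n A = {a \<in> A. 1 \<le> a \<and> 2 * a \<le> n}"

lemma zrep_cases:
  assumes "1 \<le> a" "2 * a \<le> n"
  obtains (pow3) "zrep n a = 3 ^ mexp n a * a" "2 * n < 9 * zrep n a" "2 * zrep n a \<le> n"
    | (double) "zrep n a = 2 * (3 ^ mexp n a * a)" "n < 3 * zrep n a" "9 * zrep n a \<le> 4 * n"
proof -
  define w where "w = 3 ^ mexp n a * a"
  have "n < 6 * w" "2 * w \<le> n" using mexp_bounds[OF _ assms(2)] assms(1) unfolding w_def by auto
  moreover have "zrep n a = (if 2 * n < 9 * w then w else 2 * w)" unfolding zrep_def w_def ..
  ultimately show ?thesis using pow3 double unfolding w_def[symmetric]
    by (cases "2 * n < 9 * w") auto
qed

lemma Zset_eq_image: "Zset n A = zrep n ` Alow n A"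
proof -
  have "zrep n a \<in> Zset n A" if "a \<in> Alow n A" for a
    using that mexp_bounds[of a n]
    unfolding Zset_def Alow_def real_bound_iffs by (auto simp: zrep_def)
  moreover have "Zset n A \<subseteq> zrep n ` Alow n A"
    unfolding Zset_def Alow_def real_bound_iffs by (auto simp: zrep_def)
  ultimately show ?thesis by blast
qed

lemma inj_on_zrep:
  assumes "propP A"
  shows "inj_on (zrep n) (Alow n A)"
proof (rule inj_onI)
  fix a b assume "a \<in> Alow n A" "b \<in> Alow n A" and eq: "zrep n a = zrep n b"
  then have ab: "a \<in> A" "b \<in> A" "0 < a" "0 < b" unfolding Alow_def by auto
  show "a = b"
    using eq propP_pow3_neq_double[OF assms ab]
      propP_pow3_neq_double[OF assms ab(2,1,4,3), symmetric]
      propP_pow3_cancel[OF assms ab(1,2)]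
    unfolding zrep_def by (auto split: if_splits)
qed

lemma Zset_elem:
  assumes "z \<in> Zset n A"
  obtains (pow3) a e where "a \<in> Alow n A" "z = 3 ^ e * a" "2 * n < 9 * z" "2 * z \<le> n"
    | (double) a e where "a \<in> Alow n A" "z = 2 * (3 ^ e * a)" "n < 3 * z" "9 * z \<le> 4 * n"
proof -
  obtain a where a: "a \<in> Alow n A" "z = zrep n a" using assms Zset_eq_image by blast
  then have "1 \<le> a" "2 * a \<le> n" unfolding Alow_def by auto
  then show ?thesis using a that by (cases rule: zrep_cases) auto
qed

lemma Zset_bounds:
  assumes "z \<in> Zset n A"
  shows "2 * n < 9 * z" and "2 * z \<le> n"
  using assms by (cases rule: Zset_elem; linarith)+

definition Zlow :: "nat \<Rightarrow> nat set \<Rightarrow> nat set" where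
  "Zlow n A = {z \<in> Zset n A. 2 * n < 9 * z \<and> 3 * z \<le> n}"

lemma Zlow_eq_Un: "Zodd n A \<union> ZB n A \<union> ZG n A = Zlow n A"
  unfolding Zodd_def ZB_def ZG_def Zlow_def real_bound_iffs by auto

lemma Zhalf_eq: "Zhalf n A = {z \<in> Zset n A. n < 3 * z \<and> 2 * z \<le> n}"
  unfolding Zhalf_def real_bound_iffs ..

lemma Zset_eq_Zlow_Un_Zhalf: "Zset n A = Zlow n A \<union> Zhalf n A"
  unfolding Zlow_def Zhalf_eq using Zset_bounds by fastforce

lemma Zlow_elem:
  assumes "z \<in> Zlow n A"
  obtains a e where "a \<in> Alow n A" "z = 3 ^ e * a"
proof -
  from assms have z: "z \<in> Zset n A" "3 * z \<le> n" unfolding Zlow_def by auto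
  from z(1) show thesis
  proof (cases rule: Zset_elem)
    case (pow3 a e)
    then show ?thesis using that by blast
  next
    case (double a e)
    then show ?thesis using z(2) by linarith
  qed
qed

lemma ZB_elem:
  assumes "propP A" "z \<in> ZB n A"
  obtains b f where "b \<in> Alow n A" "4 * (3 ^ Suc f * b) = 9 * z" "3 * (3 ^ Suc f * b) \<le> 2 * n"
proof -
  have z: "z \<in> Zlow n A" "even z" "3 * z div 2 \<in> Zset n A"
    using assms(2) unfolding ZB_def Zlow_def real_bound_iffs by auto
  obtain a e where a: "a \<in> Alow n A" "z = 3 ^ e * a" using z(1) by (rule Zlow_elem)
  define w where "w = 3 * z div 2"
  have w: "2 * w = 3 * z" using z(2) unfolding w_def by auto
  from z(3)[folded w_def] show thesis
  proof (cases rule: Zset_elem)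
    case (pow3 b f)
    then have "3 ^ Suc e * a = 2 * (3 ^ f * b)" using w a(2) by simp
    moreover have "a \<in> A" "b \<in> A" "0 < a" "0 < b" using a(1) pow3(1) unfolding Alow_def by auto
    ultimately show ?thesis using propP_pow3_neq_double[OF assms(1)] by blast
  next
    case (double b f)
    then show ?thesis using w by (intro that[of b f]) (simp_all add: ac_simps)
  qed
qed

definition Amid :: "nat \<Rightarrow> nat set \<Rightarrow> nat set" where
  "Amid n A = {a \<in> A. n < 2 * a \<and> 3 * a \<le> 2 * n}"

text \<open>\<open>B\<^sub>3\<close> as a set of naturals: on \<open>Z\<^sub>B\<close>, \<open>9z/4\<close> is an integer (see \<open>ZB_elem\<close>).\<close>

definition B3nat :: "nat \<Rightarrow> nat set \<Rightarrow> nat set" where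
  "B3nat n A = (\<lambda>z. 2 * z) ` Zlow n A \<union> Zhalf n A \<union> (\<lambda>z. 9 * z div 4) ` ZB n A \<union> Amid n A"

lemma B3_eq_image_B3nat:
  assumes "propP A"
  shows "B3 n A = real ` B3nat n A"
proof -
  have "9 / 4 * real z = real (9 * z div 4)" if z: "z \<in> ZB n A" for z
  proof -
    obtain b f where "4 * (3 ^ Suc f * b) = 9 * z" using ZB_elem[OF assms z] .
    then obtain c where c: "9 * z = 4 * c" by metis
    then have "9 * real z = 4 * real c" by (metis of_nat_mult of_nat_numeral)
    then show ?thesis using c by simp
  qed
  then have "(\<lambda>z. 9 / 4 * real z) ` ZB n A = real ` (\<lambda>z. 9 * z div 4) ` ZB n A"
    unfolding image_image by (rule image_cong[OF refl])
  moreover have "{a \<in> A. real n / 2 < real a \<and> real a \<le> 2 * real n / 3} = Amid n A"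
    unfolding Amid_def real_bound_iffs ..
  ultimately show ?thesis
    unfolding B3_def B3nat_def Zlow_eq_Un image_Un image_image by simp
qed

lemma double_Zlow_elem:
  assumes "t \<in> (\<lambda>z. 2 * z) ` Zlow n A"
  obtains a e where "a \<in> Alow n A" "t = 2 * (3 ^ e * a)" "4 * n < 9 * t" "3 * t \<le> 2 * n"
proof -
  obtain z where z: "z \<in> Zlow n A" "t = 2 * z" using assms by blast
  obtain a e where a: "a \<in> Alow n A" "z = 3 ^ e * a" using z(1) by (rule Zlow_elem)
  have "2 * n < 9 * z" "3 * z \<le> n" using z(1) unfolding Zlow_def by auto
  with a z(2) show thesis by (intro that[of a e]) (simp_all add: ac_simps)
qed

lemma scaled_ZB_elem:
  assumes "propP A" "t \<in> (\<lambda>z. 9 * z div 4) ` ZB n A"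
  obtains b f where "b \<in> Alow n A" "t = 3 ^ Suc f * b" "n < 2 * t" "3 * t \<le> 2 * n"
proof -
  obtain z where z: "z \<in> ZB n A" "t = 9 * z div 4" using assms(2) by blast
  obtain b f where b: "b \<in> Alow n A" "4 * (3 ^ Suc f * b) = 9 * z" "3 * (3 ^ Suc f * b) \<le> 2 * n"
    using ZB_elem[OF assms(1) z(1)] .
  have "2 * n < 9 * z" using z(1) unfolding ZB_def real_bound_iffs by auto
  moreover have "t = 3 ^ Suc f * b" using z(2) b(2) by linarith
  ultimately show thesis using b by (intro that[of b f]) (simp_all add: ac_simps)
qed

lemma B3nat_bounds:
  assumes "propP A" "t \<in> B3nat n A"
  shows "n < 3 * t \<and> 3 * t \<le> 2 * n"
proof -
  from assms(2) consider "t \<in> (\<lambda>z. 2 * z) ` Zlow n A" | "t \<in> Zhalf n A"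
    | "t \<in> (\<lambda>z. 9 * z div 4) ` ZB n A" | "t \<in> Amid n A"
    unfolding B3nat_def by blast
  then show ?thesis
  proof cases
    case 1
    then show ?thesis by (rule double_Zlow_elem) linarith
  next
    case 2
    then show ?thesis unfolding Zhalf_eq by auto
  next
    case 3
    then show ?thesis by (rule scaled_ZB_elem[OF assms(1)]) linarith
  qed (auto simp: Amid_def)
qed

lemma B3nat_small_divisor:
  assumes "propP A" "t \<in> (\<lambda>z. 2 * z) ` Zlow n A \<union> Zhalf n A \<union> (\<lambda>z. 9 * z div 4) ` ZB n A"
  obtains d where "d \<in> A" "d dvd t" "2 * d \<le> n"
proof -
  have "\<exists>d \<in> Alow n A. d dvd t"
    using assms(2)
  proof (elim UnE)
    assume "t \<in> (\<lambda>z. 2 * z) ` Zlow n A"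
    then show ?thesis by (rule double_Zlow_elem) (blast intro: dvd_mult dvd_triv_right)
  next
    assume "t \<in> Zhalf n A"
    then have "t \<in> Zset n A" unfolding Zhalf_eq by blast
    then show ?thesis by (cases rule: Zset_elem) (blast intro: dvd_mult dvd_triv_right)+
  next
    assume "t \<in> (\<lambda>z. 9 * z div 4) ` ZB n A"
    then show ?thesis by (rule scaled_ZB_elem[OF assms(1)]) (blast intro: dvd_triv_right)
  qed
  then show thesis using that unfolding Alow_def by blast
qed

lemma B3nat_parts_disjoint:
  assumes "propP A"
  shows "(\<lambda>z. 2 * z) ` Zlow n A \<inter> Zhalf n A = {}"
    and "((\<lambda>z. 2 * z) ` Zlow n A \<union> Zhalf n A) \<inter> (\<lambda>z. 9 * z div 4) ` ZB n A = {}"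
    and "((\<lambda>z. 2 * z) ` Zlow n A \<union> Zhalf n A \<union> (\<lambda>z. 9 * z div 4) ` ZB n A) \<inter> Amid n A = {}"
proof -
  have Alow: "a \<in> A" "0 < a" "2 * a \<le> n" if "a \<in> Alow n A" for a
    using that unfolding Alow_def by auto
  have False if "t \<in> (\<lambda>z. 2 * z) ` Zlow n A" "t \<in> Zset n A" for t
    using that(1)
  proof (rule double_Zlow_elem)
    fix a e assume a: "a \<in> Alow n A" "t = 2 * (3 ^ e * a)" "4 * n < 9 * t"
    from that(2) show False
    proof (cases rule: Zset_elem)
      case (pow3 b f)
      then show False using a propP_pow3_neq_double[OF assms Alow(1)[of b] Alow(1)[of a]] Alow(2) by metis
    next
      case double
      then show False using a(3) by linarith
    qed
  qed
  then show "(\<lambda>z. 2 * z) ` Zlow n A \<inter> Zhalf n A = {}" unfolding Zhalf_eq by blast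
  have False if "t \<in> (\<lambda>z. 2 * z) ` Zlow n A" "t \<in> (\<lambda>z. 9 * z div 4) ` ZB n A" for t
    using that(1)
  proof (rule double_Zlow_elem)
    fix a e assume a: "a \<in> Alow n A" "t = 2 * (3 ^ e * a)"
    from that(2) show False
    proof (rule scaled_ZB_elem[OF assms])
      fix b f assume "b \<in> Alow n A" "t = 3 ^ Suc f * b"
      then show False using a propP_pow3_neq_double[OF assms Alow(1)[of b] Alow(1)[of a]] Alow(2) by metis
    qed
  qed
  moreover have "\<not> n < 2 * t" if "t \<in> Zhalf n A" for t using that unfolding Zhalf_eq by auto
  moreover have "n < 2 * t" if "t \<in> (\<lambda>z. 9 * z div 4) ` ZB n A" for t
    using that by (rule scaled_ZB_elem[OF assms])
  ultimately show "((\<lambda>z. 2 * z) ` Zlow n A \<union> Zhalf n A) \<inter> (\<lambda>z. 9 * z div 4) ` ZB n A = {}"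
    by blast
  show "((\<lambda>z. 2 * z) ` Zlow n A \<union> Zhalf n A \<union> (\<lambda>z. 9 * z div 4) ` ZB n A) \<inter> Amid n A = {}"
  proof (intro equals0I)
    fix t assume "t \<in> ((\<lambda>z. 2 * z) ` Zlow n A \<union> Zhalf n A \<union> (\<lambda>z. 9 * z div 4) ` ZB n A) \<inter> Amid n A"
    then have t: "t \<in> (\<lambda>z. 2 * z) ` Zlow n A \<union> Zhalf n A \<union> (\<lambda>z. 9 * z div 4) ` ZB n A"
      "t \<in> A" "n < 2 * t" unfolding Amid_def by auto
    from assms t(1) show False
      by (rule B3nat_small_divisor) (use propP_small_divisor_not_in[OF assms] t(2,3) in blast)
  qed
qed

lemma B3nat_disjoint_A3:
  assumes "propP A"
  shows "B3nat n A \<inter> A3 n A = {}"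
proof (intro equals0I)
  fix t assume t: "t \<in> B3nat n A \<inter> A3 n A"
  show False
  proof (cases "t \<in> Amid n A")
    case True
    then have "t \<in> A" "t + n < 3 * t" unfolding Amid_def by auto
    then show False using propP_not_in_A3[OF assms, of t t] t by auto
  next
    case False
    with t have "t \<in> (\<lambda>z. 2 * z) ` Zlow n A \<union> Zhalf n A \<union> (\<lambda>z. 9 * z div 4) ` ZB n A"
      unfolding B3nat_def by blast
    with assms show False
      by (rule B3nat_small_divisor) (use propP_not_in_A3[OF assms] t in blast)
  qed
qed

lemma card_Zlow_Zhalf:
  assumes "propP A" "finite A"
  shows "card (Zlow n A) + card (Zhalf n A) = card (Alow n A)"
proof -
  have "finite (Zset n A)" using assms(2) unfolding Zset_eq_image Alow_def by simp
  then have "card (Zlow n A) + card (Zhalf n A) = card (Zset n A)"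
    unfolding Zset_eq_Zlow_Un_Zhalf
    by (intro card_Un_disjoint[symmetric]) (auto simp: Zlow_def Zhalf_eq)
  also have "\<dots> = card (Alow n A)"
    unfolding Zset_eq_image by (rule card_image[OF inj_on_zrep[OF assms(1)]])
  finally show ?thesis .
qed

lemma inj_on_scaled_ZB:
  assumes "propP A"
  shows "inj_on (\<lambda>z. 9 * z div 4) (ZB n A)"
proof (rule inj_onI)
  fix x y assume "x \<in> ZB n A" "y \<in> ZB n A" "9 * x div 4 = 9 * y div 4"
  moreover from ZB_elem[OF assms \<open>x \<in> ZB n A\<close>] have "4 dvd 9 * x" by (metis dvd_triv_left)
  moreover from ZB_elem[OF assms \<open>y \<in> ZB n A\<close>] have "4 dvd 9 * y" by (metis dvd_triv_left)
  ultimately have "9 * x = 9 * y" by (metis dvd_div_mult_self)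
  then show "x = y" by simp
qed

lemma card_B3nat:
  assumes "propP A" "finite A"
  shows "card (B3nat n A) = card {a \<in> A. 1 \<le> a \<and> 3 * a \<le> 2 * n} + card (ZB n A)"
proof -
  have "finite (Zset n A)" using assms(2) unfolding Zset_eq_image Alow_def by simp
  then have fin: "finite (Zlow n A)" "finite (Zhalf n A)" "finite (ZB n A)" "finite (Amid n A)"
    using assms(2) unfolding Zset_eq_Zlow_Un_Zhalf Zlow_eq_Un[symmetric] Amid_def by auto
  have "card (B3nat n A) = card ((\<lambda>z. 2 * z) ` Zlow n A) + card (Zhalf n A)
      + card ((\<lambda>z. 9 * z div 4) ` ZB n A) + card (Amid n A)"
    unfolding B3nat_def using fin B3nat_parts_disjoint[OF assms(1)] by (simp add: card_Un_disjoint)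
  also have "\<dots> = card (Alow n A) + card (Amid n A) + card (ZB n A)"
    using card_Zlow_Zhalf[OF assms] card_image[OF inj_on_scaled_ZB[OF assms(1)]]
      card_image[of "\<lambda>z. 2 * z" "Zlow n A"] by (simp add: inj_on_def)
  also have "card (Alow n A) + card (Amid n A) = card {a \<in> A. 1 \<le> a \<and> 3 * a \<le> 2 * n}"
  proof -
    have "{a \<in> A. 1 \<le> a \<and> 3 * a \<le> 2 * n} = Alow n A \<union> Amid n A"
      unfolding Alow_def Amid_def by auto
    then show ?thesis using fin(4) assms(2) unfolding Alow_def Amid_def
      by (simp add: card_Un_disjoint[symmetric] disjoint_iff)
  qed
  finally show ?thesis .
qed

theorem mainTheorem17:
  fixes n :: nat and A :: "nat set"
  assumes "A \<subseteq> {1..n}" and "propP A"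
  shows "B3 n A \<subseteq> \<int>
    \<and> B3 n A \<subseteq> {real n / 3 <.. 2 * real n / 3}
    \<and> card (B3 n A) = card {a \<in> A. 1 \<le> a \<and> real a \<le> 2 * real n / 3} + card (ZB n A)
    \<and> B3 n A \<inter> real ` A3 n A = {}"
proof -
  have finite: "finite A" using assms(1) finite_subset by blast
  have B3: "B3 n A = real ` B3nat n A" by (rule B3_eq_image_B3nat[OF assms(2)])
  have "B3 n A \<subseteq> {real n / 3 <.. 2 * real n / 3}"
    unfolding B3 image_subset_iff greaterThanAtMost_iff real_bound_iffs
    using B3nat_bounds[OF assms(2)] by blast
  moreover have "card (B3 n A) = card {a \<in> A. 1 \<le> a \<and> real a \<le> 2 * real n / 3} + card (ZB n A)"
    unfolding B3 real_bound_iffs card_image[OF inj_on_of_nat] by (rule card_B3nat[OF assms(2) finite])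
  moreover have "B3 n A \<inter> real ` A3 n A = {}"
    unfolding B3 image_Int[OF inj_on_of_nat, symmetric] B3nat_disjoint_A3[OF assms(2)] by simp
  ultimately show ?thesis unfolding B3 by auto
qed

end
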